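(* Let $q=2^{r}$ with $r$ a positive integer. Then for every positive integer $h$, \[ q^{h}MK^{h}=\sum_{i=0}^{h-1}(-1)^{h+i+1}\binom{h}{i}N^{h-i}q^{i}MK^{i} +q\sum_{i=0}^{\min\{N,h\}}(-1)^{h+i}C_{i}\sum_{t=i}^{h}t!\,S(h,t)\,2^{h-t}\binom{N-i}{N-t}, \] where $N=q(q^2-1)$ is the order of $SL(2,q)$, $S(h,t)=\frac{1}{t!}\sum_{j=0}^{t}(-1)^{t-j}\binom{t}{j}j^{h}$, and $\{C_i\}_{i=0}^{N}$ is the weight distribution of the code $C=C(SL(2,q))$, given for $0\le i\le N$ by \[ C_i=\sum\binom{q^2}{\nu_0}\prod_{tr(\beta^{-1})=0}\binom{q^2+q}{\nu_\beta}\prod_{tr(\beta^{-1})=1}\binom{q^2-q}{\nu_\beta}, \] where the sum runs over all families of nonnegative integers $\{\nu_\beta\}_{\beta\in\mathbb{F}_q}$ with $\sum_\beta\nu_\beta=i$ and $\sum_\beta\nu_\beta\beta=0$ in $\mathbb{F}_q$, and the first and second products run over $\beta\in\mathbb{F}_q^*$ with $tr(\beta^{-1})=0$, respectively $tr(\beta^{-1})=1$.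
   Context: $\mathbb{F}_q$ is the field with $q$ elements, $tr:\mathbb{F}_q\to\mathbb{F}_2$ the absolute trace $tr(x)=x+x^2+\cdots+x^{2^{r-1}}$, $\lambda(x)=(-1)^{tr(x)}$. The Kloosterman sum is $K(\lambda;a)=\sum_{\alpha\in\mathbb{F}_q^*}\lambda(\alpha+a\alpha^{-1})$ for $a\in\mathbb{F}_q^*$, and $MK^h=\sum_{a\in\mathbb{F}_q^*}K(\lambda;a)^h$ (so $MK^0=q-1$). Fix an ordering $g_1,\dots,g_N$ of $SL(2,q)$, let $v=(Tr(g_1),\dots,Tr(g_N))\in\mathbb{F}_q^N$ with $Tr$ the matrix trace, and let $C(SL(2,q))=\{u\in\mathbb{F}_2^N:u\cdot v=0\}$ (dot product in $\mathbb{F}_q$). $C_i$ is the number of codewords of Hamming weight $i$. Convention: $\binom{b}{a}=0$ if $b<a$. *)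

theory Defs
  imports "HOL-Analysis.Analysis" "HOL-Library.FuncSet"
begin

definition abs_tr :: "nat \<Rightarrow> 'a::field \<Rightarrow> 'a" where
  "abs_tr r x = (\<Sum>k<r. x ^ (2 ^ k))"

definition lam :: "nat \<Rightarrow> 'a::field \<Rightarrow> int" where
  "lam r x = (if abs_tr r x = 0 then 1 else -1)"

definition kloosterman :: "nat \<Rightarrow> 'a::{field,finite} \<Rightarrow> int" where
  "kloosterman r a = (\<Sum>\<alpha>\<in>UNIV - {0}. lam r (\<alpha> + a * inverse \<alpha>))"

definition MK :: "nat \<Rightarrow> 'a::{field,finite} itself \<Rightarrow> nat \<Rightarrow> int" where
  "MK r TYPE('a) h = (\<Sum>a\<in>(UNIV::'a set) - {0}. (kloosterman r a) ^ h)"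

definition SL2 :: "'a::{field,finite} itself \<Rightarrow> ('a^2^2) set" where
  "SL2 TYPE('a) = {A :: 'a^2^2. det A = 1}"

text \<open>The binary code C(SL(2,q)): words u in F_2^N (entries 0 or 1 of F_q), indexed by
  the elements of SL(2,q) rather than by an ordering g_1..g_N, with u . v = 0 computed in F_q.\<close>
definition code_SL2 :: "'a::{field,finite} itself \<Rightarrow> ('a^2^2 \<Rightarrow> 'a) set" where
  "code_SL2 TYPE('a) = {u \<in> SL2 TYPE('a) \<rightarrow>\<^sub>E {0, 1}. (\<Sum>g\<in>SL2 TYPE('a). u g * trace g) = 0}"

definition hweight :: "'a::{field,finite} itself \<Rightarrow> ('a^2^2 \<Rightarrow> 'a) \<Rightarrow> nat" where
  "hweight TYPE('a) u = card {g \<in> SL2 TYPE('a). u g \<noteq> 0}"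

definition Cw :: "'a::{field,finite} itself \<Rightarrow> nat \<Rightarrow> nat" where
  "Cw TYPE('a) i = card {u \<in> code_SL2 TYPE('a). hweight TYPE('a) u = i}"

definition stirling2 :: "nat \<Rightarrow> nat \<Rightarrow> real" where
  "stirling2 h t = (1 / fact t) * (\<Sum>j=0..t. (-1) ^ (t - j) * real (t choose j) * real j ^ h)"

definition ibinom :: "int \<Rightarrow> int \<Rightarrow> nat" where
  "ibinom b a = (if 0 \<le> a \<and> a \<le> b then nat b choose nat a else 0)"

end

theory Submission
  imports Defs "HOL-Computational_Algebra.Polynomial"
begin

text \<open>
  The dual of \<open>C(SL(2,q))\<close> consists of the words \<open>g \<mapsto> tr(a Tr(g))\<close>, and the word
  belonging to \<open>a\<close> has weight \<open>w(a)\<close> with \<open>2 w(a) = N - \<Sum>\<^sub>g \<lambda>(a Tr(g))\<close>.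
  Exactly \<open>q\<^sup>2 - q + q n(\<beta>)\<close> matrices of \<open>SL(2,q)\<close> have trace \<open>\<beta>\<close>, where
  \<open>n(\<beta>)\<close> counts the solutions of \<open>x + x\<^sup>-\<^sup>1 = \<beta>\<close>; hence the character sum equals
  \<open>q K(\<lambda>; a\<^sup>2)\<close> and \<open>\<Sum>\<^sub>a (2 w(a))\<^sup>h\<close> expands binomially into the moments \<open>MK\<^sup>k\<close>.
  On the other hand, Pless' power moment identity, obtained by counting pairs
  (set \<open>T\<close> of \<open>t\<close> matrices, \<open>a\<close> with \<open>T\<close> in the support of its word) through the
  orthogonality of \<open>\<lambda>\<close>, expresses the same sum by the weight distribution of \<open>C\<close>.
  A codeword is a set of matrices with vanishing trace sum; sorting it by traces
  gives the formula for \<open>C\<^sub>i\<close>, since \<open>n(\<beta>) = 2\<close> or \<open>0\<close> according to \<open>tr(\<beta>\<^sup>-\<^sup>1)\<close>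
  (Artin--Schreier).
\<close>

section \<open>Finite fields\<close>

lemma finite_field_power_card_minus_one:
  fixes x :: "'a::{field,finite}"
  assumes "x \<noteq> 0"
  shows "x ^ (CARD('a) - 1) = 1"
proof -
  let ?U = "UNIV - {0::'a}"
  have bij: "bij_betw (\<lambda>y. x * y) ?U ?U"
    by (rule bij_betwI[where g="\<lambda>y. inverse x * y"]) (use assms in \<open>auto simp: field_simps\<close>)
  have "(\<Prod>y\<in>?U. y) = (\<Prod>y\<in>?U. x * y)"
    using prod.reindex_bij_betw[OF bij, of "\<lambda>y. y"] by simp
  also have "\<dots> = x ^ card ?U * (\<Prod>y\<in>?U. y)"
    by (simp add: prod.distrib)
  finally show ?thesis
    by (simp add: card_Diff_subset)
qed

lemma finite_field_power_card:
  fixes x :: "'a::{field,finite}"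
  shows "x ^ CARD('a) = x"
proof (cases "x = 0")
  case False
  have "CARD('a) = Suc (CARD('a) - 1)"
    using finite_UNIV_card_ge_0[where 'a='a] by simp
  then have "x ^ CARD('a) = x * x ^ (CARD('a) - 1)"
    by (metis power_Suc)
  with finite_field_power_card_minus_one[OF False] show ?thesis by simp
qed simp

lemma card_finite_field_mult_eq:
  fixes m :: "'a::{field,finite}"
  shows "card {(b, c). b * c = m} = (if m = 0 then 2 * CARD('a) - 1 else CARD('a) - 1)"
proof (cases "m = 0")
  case True
  have "{(b::'a, c). b * c = m} = {0} \<times> UNIV \<union> (UNIV - {0}) \<times> {0}"
    using True by auto
  moreover have "card ({0::'a} \<times> (UNIV::'a set) \<union> (UNIV - {0}) \<times> {0::'a}) = CARD('a) + (CARD('a) - 1)"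
    by (subst card_Un_disjoint) (auto simp: card_cartesian_product card_Diff_subset)
  ultimately show ?thesis
    using True finite_UNIV_card_ge_0[where 'a='a] by simp
next
  case False
  have "{(b::'a, c). b * c = m} = (\<lambda>b. (b, m / b)) ` (UNIV - {0})"
    using False by (auto simp: field_simps image_iff)
  moreover have "inj_on (\<lambda>b. (b, m / b)) (UNIV - {0::'a})"
    by (auto intro: inj_onI)
  ultimately show ?thesis
    using False by (simp add: card_image card_Diff_subset)
qed

section \<open>Finite fields of characteristic two\<close>

locale char2_finite_field =
  fixes r :: nat and TY :: "'a::{field,finite} itself"
  assumes r_pos: "r > 0" and card_eq: "CARD('a) = 2 ^ r"
begin

lemma two_eq_zero: "(2::'a) = 0"
proof -
  have "odd (CARD('a) - 1)"
    using card_eq r_pos by simp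
  then have "(-1::'a) = 1"
    using finite_field_power_card_minus_one[of "-1::'a"] by simp
  then show ?thesis
    by (metis add_eq_0_iff one_add_one)
qed

lemma add_self_eq_zero [simp]: "(x::'a) + x = 0"
  by (metis mult_2 two_eq_zero mult_zero_left)

lemma uminus_eq_self [simp]: "- (x::'a) = x"
  by (metis add_self_eq_zero add_eq_0_iff)

lemma diff_eq_add: "(x::'a) - y = x + y"
  by simp

lemma eq_iff_add_eq_0: "(x::'a) = y \<longleftrightarrow> x + y = 0"
  by (metis add_self_eq_zero add_eq_0_iff uminus_eq_self)

lemma power2_add: "((x::'a) + y) ^ 2 = x ^ 2 + y ^ 2"
  by (simp add: power2_sum mult_2[symmetric] two_eq_zero del: mult_2)

lemma power_two_power_add: "((x::'a) + y) ^ (2 ^ k) = x ^ (2 ^ k) + y ^ (2 ^ k)"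
proof (induction k)
  case (Suc k)
  have "(x + y) ^ (2 ^ Suc k) = ((x + y) ^ (2 ^ k)) ^ 2"
    by (simp add: power_mult[symmetric] mult.commute)
  also have "\<dots> = (x ^ (2 ^ k)) ^ 2 + (y ^ (2 ^ k)) ^ 2"
    using Suc by (simp add: power2_add)
  finally show ?case
    by (simp add: power_mult[symmetric] mult.commute)
qed simp

lemma power2_sum_char2:
  fixes f :: "'b \<Rightarrow> 'a"
  shows "(sum f A) ^ 2 = (\<Sum>k\<in>A. (f k) ^ 2)"
  by (induction A rule: infinite_finite_induct) (simp_all add: power2_add)

lemma abs_tr_add: "abs_tr r ((x::'a) + y) = abs_tr r x + abs_tr r y"
  by (simp add: abs_tr_def power_two_power_add sum.distrib)

lemma abs_tr_0 [simp]: "abs_tr r (0::'a) = 0"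
  by (simp add: abs_tr_def zero_power)

lemma abs_tr_power2: "abs_tr r ((x::'a) ^ 2) = abs_tr r x"
proof -
  have "abs_tr r (x ^ 2) + x = (\<Sum>k<Suc r. x ^ (2 ^ k))"
    by (subst sum.lessThan_Suc_shift)
       (simp add: abs_tr_def power_mult[symmetric] mult.commute add.commute)
  also have "\<dots> = abs_tr r x + x"
    using finite_field_power_card[of x] by (simp add: abs_tr_def card_eq)
  finally show ?thesis by simp
qed

lemma abs_tr_0_or_1: "abs_tr r (x::'a) = 0 \<or> abs_tr r x = 1"
proof -
  have "(abs_tr r x) ^ 2 = abs_tr r x"
    using power2_sum_char2[of "\<lambda>k. x ^ 2 ^ k" "{..<r}"] abs_tr_power2[of x]
    by (simp add: abs_tr_def power_mult[symmetric] mult.commute)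
  then have "abs_tr r x * (abs_tr r x - 1) = 0"
    by (simp add: power2_eq_square algebra_simps)
  then show ?thesis by auto
qed

text \<open>The trace is a polynomial of degree \<open>2^(r-1) < CARD('a)\<close>, so it cannot vanish everywhere.\<close>

lemma ex_abs_tr_eq_1: "\<exists>x::'a. abs_tr r x = 1"
proof (rule ccontr)
  assume "\<not> ?thesis"
  then have all0: "abs_tr r (x::'a) = 0" for x
    using abs_tr_0_or_1 by blast
  define p :: "'a poly" where "p = (\<Sum>k<r. monom 1 (2 ^ k))"
  have poly_p: "poly p x = abs_tr r x" for x
    by (simp add: p_def poly_sum poly_monom abs_tr_def)
  have "coeff p (2 ^ (r - 1)) = (\<Sum>k<r. if k = r - 1 then 1 else 0)"
    unfolding p_def coeff_sum coeff_monom by (intro sum.cong) auto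
  then have "p \<noteq> 0"
    using r_pos by auto
  then have "card {x. poly p x = 0} \<le> degree p"
    by (rule card_poly_roots_bound)
  also have "degree p \<le> 2 ^ (r - 1)"
    unfolding p_def
  proof (rule degree_sum_le)
    fix k assume "k \<in> {..<r}"
    then have "(2::nat) ^ k \<le> 2 ^ (r - 1)"
      by (intro power_increasing) auto
    then show "degree (monom (1::'a) (2 ^ k)) \<le> 2 ^ (r - 1)"
      using degree_monom_le[of "1::'a" "2 ^ k"] by linarith
  qed simp
  also have "(2::nat) ^ (r - 1) < 2 ^ r"
    using r_pos by (intro power_strict_increasing) auto
  finally show False
    using poly_p all0 card_eq by simp
qed

lemma card_abs_tr_eq_0: "2 * card {x::'a. abs_tr r x = 0} = CARD('a)"
proof -
  obtain x0 :: 'a where x0: "abs_tr r x0 = 1"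
    using ex_abs_tr_eq_1 by blast
  let ?K = "{x::'a. abs_tr r x = 0}" and ?L = "{x::'a. abs_tr r x = 1}"
  have "bij_betw (\<lambda>x. x + x0) ?K ?L"
    by (rule bij_betwI[where g="\<lambda>x. x + x0"]) (auto simp: abs_tr_add x0 add.assoc)
  then have "card ?K = card ?L"
    by (rule bij_betw_same_card)
  moreover have "?K \<union> ?L = UNIV" and "?K \<inter> ?L = {}"
    using abs_tr_0_or_1 by auto
  ultimately show ?thesis
    by (metis card_Un_disjoint finite mult_2)
qed

lemma lam_add: "lam r ((x::'a) + y) = lam r x * lam r y"
  using abs_tr_0_or_1[of x] abs_tr_0_or_1[of y] by (auto simp: lam_def abs_tr_add)

lemma lam_0 [simp]: "lam r (0::'a) = 1"
  by (simp add: lam_def)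

lemma lam_eq_1_or_minus_1: "lam r (x::'a) = 1 \<or> lam r x = -1"
  by (simp add: lam_def)

lemma lam_sum: "lam r (sum f A :: 'a) = (\<Prod>g\<in>A. lam r (f g))"
  by (induction A rule: infinite_finite_induct) (simp_all add: lam_add)

lemma sum_lam_mult: "(\<Sum>x\<in>UNIV. lam r (a * (x::'a))) = (if a = 0 then int CARD('a) else 0)"
proof (cases "a = 0")
  case False
  obtain x0 :: 'a where "abs_tr r x0 = 1"
    using ex_abs_tr_eq_1 by blast
  then have lam_x0: "lam r x0 = -1"
    by (simp add: lam_def)
  have "bij_betw (\<lambda>x. x + x0) UNIV UNIV"
    by (rule bij_betwI[where g="\<lambda>x. x + x0"]) (auto simp: add.assoc)
  then have "(\<Sum>x\<in>UNIV. lam r (x::'a)) = (\<Sum>x\<in>UNIV. lam r (x + x0))"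
    using sum.reindex_bij_betw[of "\<lambda>x. x + x0" UNIV UNIV "lam r"] by simp
  also have "\<dots> = - (\<Sum>x\<in>UNIV. lam r (x::'a))"
    by (simp add: lam_add lam_x0 sum_negf)
  finally have sum_zero: "(\<Sum>x\<in>UNIV. lam r (x::'a)) = 0"
    by simp
  have "bij_betw (\<lambda>x. a * x) UNIV UNIV"
    by (rule bij_betwI[where g="\<lambda>x. inverse a * x"]) (use False in auto)
  then have "(\<Sum>x\<in>UNIV. lam r (a * x)) = (\<Sum>x\<in>UNIV. lam r (x::'a))"
    by (simp add: sum.reindex_bij_betw)
  with False sum_zero show ?thesis by simp
qed simp

lemma artin_schreier_eq_iff: "(y::'a) ^ 2 + y = y0 ^ 2 + y0 \<longleftrightarrow> y = y0 \<or> y = y0 + 1"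
proof -
  have "y ^ 2 + y + (y0 ^ 2 + y0) = (y + y0) * (y + y0 + 1)"
    by (simp add: power2_eq_square algebra_simps two_eq_zero flip: mult_2)
  then show ?thesis
    by (simp add: eq_iff_add_eq_0[of "y ^ 2 + y"] eq_iff_add_eq_0[of y] add.assoc)
qed

lemma card_artin_schreier:
  "card {y::'a. y ^ 2 + y = c} = (if abs_tr r c = 0 then 2 else 0)"
proof -
  let ?\<phi> = "\<lambda>y::'a. y ^ 2 + y"
  have fibre: "card {y. ?\<phi> y = ?\<phi> y0} = 2" for y0
  proof -
    have "{y. ?\<phi> y = ?\<phi> y0} = {y0, y0 + 1}"
      by (auto simp: artin_schreier_eq_iff)
    then show ?thesis by simp
  qed
  have tr_\<phi>: "abs_tr r (?\<phi> y) = 0" for y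
    by (simp add: abs_tr_add abs_tr_power2)
  have "CARD('a) = (\<Sum>c\<in>range ?\<phi>. card {y. ?\<phi> y = c})"
    using sum.group[of "UNIV::'a set" "range ?\<phi>" ?\<phi> "\<lambda>_. 1::nat"] by simp
  also have "\<dots> = (\<Sum>c\<in>range ?\<phi>. 2)"
    using fibre by (intro sum.cong) auto
  also have "\<dots> = 2 * card (range ?\<phi>)"
    by simp
  finally have "card (range ?\<phi>) = card {c::'a. abs_tr r c = 0}"
    using card_abs_tr_eq_0 by linarith
  then have range_\<phi>: "range ?\<phi> = {c::'a. abs_tr r c = 0}"
    using tr_\<phi> by (intro card_subset_eq) auto
  show ?thesis
  proof (cases "c \<in> range ?\<phi>")
    case True
    then show ?thesis using fibre range_\<phi> by force
  next
    case False
    then have "{y. ?\<phi> y = c} = {}" by auto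
    then show ?thesis using False range_\<phi> by auto
  qed
qed

end

section \<open>The trace distribution on \<open>SL(2,q)\<close>\<close>

lemma card_vec2x2:
  "card {A :: ('a::zero)^2^2. P (A$1$1) (A$1$2) (A$2$1) (A$2$2)} = card {(a, b, c, d). P a b c d}"
  (is "card ?S = card ?T")
proof -
  let ?f = "\<lambda>A :: 'a^2^2. (A$1$1, A$1$2, A$2$1, A$2$2)"
  have "inj_on ?f ?S"
  proof (rule inj_onI)
    fix A B :: "'a^2^2"
    assume "?f A = ?f B"
    then show "A = B"
      by (simp add: vec_eq_iff forall_2)
  qed
  then have "card ?S = card (?f ` ?S)"
    by (simp add: card_image)
  also have "?f ` ?S = ?T"
  proof (intro set_eqI iffI)
    fix x assume "x \<in> ?T"
    then obtain a b c d where x: "x = (a, b, c, d)" and "P a b c d"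
      by auto
    let ?A = "vector [vector [a, b], vector [c, d]] :: 'a^2^2"
    have "?f ?A = x" and "?A \<in> ?S"
      using x \<open>P a b c d\<close> by simp_all
    then show "x \<in> ?f ` ?S"
      by blast
  qed auto
  finally show ?thesis .
qed

definition recip_sum_count :: "'a::field \<Rightarrow> nat" where
  "recip_sum_count \<beta> = card {x. x \<noteq> 0 \<and> x + inverse x = \<beta>}"

lemma sum_recip_sum_count:
  fixes f :: "'a::{field,finite} \<Rightarrow> 'b::comm_semiring_1"
  shows "(\<Sum>\<beta>\<in>UNIV. of_nat (recip_sum_count \<beta>) * f \<beta>) = (\<Sum>x\<in>UNIV - {0}. f (x + inverse x))"
proof -
  have "(\<Sum>x\<in>UNIV - {0}. f (x + inverse x))
        = (\<Sum>\<beta>\<in>UNIV. \<Sum>x\<in>{x\<in>UNIV - {0}. x + inverse x = \<beta>}. f (x + inverse x))"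
    by (rule sum.group[symmetric]) auto
  also have "\<dots> = (\<Sum>\<beta>\<in>UNIV. of_nat (recip_sum_count \<beta>) * f \<beta>)"
    by (intro sum.cong refl) (simp add: recip_sum_count_def conj_commute)
  finally show ?thesis ..
qed

lemma sum_recip_sum_count_eq: "(\<Sum>\<beta>\<in>UNIV. recip_sum_count (\<beta>::'a::{field,finite})) = CARD('a) - 1"
  using sum_recip_sum_count[of "\<lambda>_. 1::nat"] by (simp add: card_Diff_subset)

lemma mult_diff_eq_1_iff:
  fixes a \<beta> :: "'a::field"
  shows "a * (\<beta> - a) = 1 \<longleftrightarrow> a \<noteq> 0 \<and> a + inverse a = \<beta>"
  by (cases "a = 0") (auto simp: field_simps)

text \<open>Fixing the diagonal entry \<open>a\<close>, a matrix of trace \<open>\<beta>\<close> in \<open>SL(2,q)\<close> is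
  an off-diagonal pair \<open>(b, c)\<close> with \<open>b c = a (\<beta> - a) - 1\<close>.\<close>

lemma card_SL2_trace_eq:
  fixes \<beta> :: "'a::{field,finite}"
  shows "card {g \<in> SL2 TYPE('a). trace g = \<beta>}
         = CARD('a) * (CARD('a) - 1) + CARD('a) * recip_sum_count \<beta>"
proof -
  let ?q = "CARD('a)"
  let ?m = "\<lambda>a. a * (\<beta> - a) - 1"
  let ?T = "SIGMA a:UNIV. {(b, c). b * c = ?m a}"
  have "card {g \<in> SL2 TYPE('a). trace g = \<beta>}
        = card {A :: 'a^2^2. A$1$1 * A$2$2 - A$1$2 * A$2$1 = 1 \<and> A$1$1 + A$2$2 = \<beta>}"
    by (simp add: SL2_def det_2 trace_def sum_2)
  also have "\<dots> = card {(a, b, c, d). a * d - b * c = 1 \<and> a + d = \<beta>}"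
    by (rule card_vec2x2[where P="\<lambda>a b c d. a * d - b * c = 1 \<and> a + d = \<beta>"])
  also have "{(a, b, c, d). a * d - b * c = 1 \<and> a + d = \<beta>} = (\<lambda>(a, b, c). (a, b, c, \<beta> - a)) ` ?T"
  proof (intro set_eqI iffI)
    fix x assume "x \<in> {(a, b, c, d). a * d - b * c = 1 \<and> a + d = \<beta>}"
    then obtain a b c d where x: "x = (a, b, c, d)" and det: "a * d - b * c = 1" and tr: "a + d = \<beta>"
      by blast
    have d: "d = \<beta> - a"
      using tr by (metis add_diff_cancel_left')
    have "b * c = ?m a"
      using det d by algebra
    with x d show "x \<in> (\<lambda>(a, b, c). (a, b, c, \<beta> - a)) ` ?T"
      by (intro image_eqI[where x="(a, b, c)"]) simp_all
  next
    fix x assume "x \<in> (\<lambda>(a, b, c). (a, b, c, \<beta> - a)) ` ?T"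
    then obtain a b c where "x = (a, b, c, \<beta> - a)" and "b * c = ?m a"
      by auto
    then show "x \<in> {(a, b, c, d). a * d - b * c = 1 \<and> a + d = \<beta>}"
      by simp
  qed
  also have "card ((\<lambda>(a, b, c). (a, b, c, \<beta> - a)) ` ?T) = card ?T"
    by (rule card_image) (simp add: inj_on_def)
  also have "\<dots> = (\<Sum>a\<in>UNIV. card {(b, c). b * c = ?m a})"
    by (rule card_SigmaI) simp_all
  also have "\<dots> = (\<Sum>a\<in>UNIV. (?q - 1) + (if ?m a = 0 then ?q else 0))"
    using finite_UNIV_card_ge_0[where 'a='a]
    by (intro sum.cong refl) (simp add: card_finite_field_mult_eq mult_2)
  also have "\<dots> = ?q * (?q - 1) + ?q * card {a. ?m a = 0}"
    unfolding sum.distrib by (simp add: sum.If_cases)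
  also have "{a. ?m a = 0} = {x. x \<noteq> 0 \<and> x + inverse x = \<beta>}"
    by (simp add: mult_diff_eq_1_iff)
  finally show ?thesis
    by (simp add: recip_sum_count_def)
qed

definition trace_count :: "'a::{field,finite} \<Rightarrow> nat" where
  "trace_count \<beta> = card {g \<in> SL2 TYPE('a). trace g = \<beta>}"

lemma sum_SL2_trace:
  fixes f :: "'a::{field,finite} \<Rightarrow> 'b::comm_semiring_1"
  shows "(\<Sum>g\<in>SL2 TYPE('a). f (trace g)) = (\<Sum>\<beta>\<in>UNIV. of_nat (trace_count \<beta>) * f \<beta>)"
proof -
  have "(\<Sum>g\<in>SL2 TYPE('a). f (trace g))
        = (\<Sum>\<beta>\<in>UNIV. \<Sum>g\<in>{g\<in>SL2 TYPE('a). trace g = \<beta>}. f (trace g))"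
    by (rule sum.group[symmetric]) auto
  also have "\<dots> = (\<Sum>\<beta>\<in>UNIV. of_nat (trace_count \<beta>) * f \<beta>)"
    by (intro sum.cong refl) (simp add: trace_count_def)
  finally show ?thesis .
qed

lemma card_SL2: "card (SL2 TYPE('a::{field,finite})) = CARD('a) * (CARD('a)^2 - 1)"
proof -
  let ?q = "CARD('a)"
  have "card (SL2 TYPE('a)) = (\<Sum>\<beta>\<in>UNIV. trace_count (\<beta>::'a))"
    using sum_SL2_trace[of "\<lambda>_. 1::nat"] by simp
  also have "\<dots> = ?q * (?q * (?q - 1)) + ?q * (?q - 1)"
    by (simp add: trace_count_def card_SL2_trace_eq sum.distrib flip: sum_distrib_left)
       (simp add: sum_recip_sum_count_eq)
  also have "\<dots> = ?q * (?q^2 - 1)"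
    by (cases ?q) (simp_all add: power2_eq_square algebra_simps)
  finally show ?thesis .
qed

context char2_finite_field
begin

lemma recip_sum_count_0: "recip_sum_count (0::'a) = 1"
proof -
  have "x + inverse x = 0 \<longleftrightarrow> (x + 1) * (x + 1) = 0" if "x \<noteq> 0" for x :: 'a
  proof -
    have "(x + 1) * (x + 1) = x * (x + inverse x)"
      using that by (simp add: field_simps two_eq_zero flip: mult_2)
    with that show ?thesis by simp
  qed
  then have "{x::'a. x \<noteq> 0 \<and> x + inverse x = 0} = {1}"
    by (auto simp: eq_iff_add_eq_0[of _ 1])
  then show ?thesis
    by (simp add: recip_sum_count_def)
qed

text \<open>For \<open>\<beta> \<noteq> 0\<close> the substitution \<open>x = \<beta> y\<close> turns \<open>x + 1/x = \<beta>\<close> into the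
  Artin--Schreier equation \<open>y\<^sup>2 + y = \<beta>\<^sup>-\<^sup>2\<close>.\<close>

lemma recip_sum_count_nonzero:
  assumes "(\<beta>::'a) \<noteq> 0"
  shows "recip_sum_count \<beta> = (if abs_tr r (inverse \<beta>) = 0 then 2 else 0)"
proof -
  let ?c = "(inverse \<beta>) ^ 2"
  have equation: "x \<noteq> 0 \<and> x + inverse x = \<beta> \<longleftrightarrow> (x / \<beta>) ^ 2 + x / \<beta> = ?c" for x :: 'a
  proof -
    have frac: "(x / \<beta>) ^ 2 + x / \<beta> + ?c = (x * (x + \<beta>) + 1) / \<beta> ^ 2"
      using assms by (simp add: field_simps power2_eq_square)
    have "x \<noteq> 0 \<and> x + inverse x = \<beta> \<longleftrightarrow> x * (\<beta> - x) = 1"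
      by (rule mult_diff_eq_1_iff[symmetric])
    also have "\<dots> \<longleftrightarrow> x * (x + \<beta>) = 1"
      by (simp add: diff_eq_add add.commute)
    also have "\<dots> \<longleftrightarrow> x * (x + \<beta>) + 1 = 0"
      by (rule eq_iff_add_eq_0)
    finally show ?thesis
      using frac assms by (simp add: eq_iff_add_eq_0[of "(x / \<beta>) ^ 2 + x / \<beta>"])
  qed
  have "{x. x \<noteq> 0 \<and> x + inverse x = \<beta>} = (\<lambda>y. \<beta> * y) ` {y. y ^ 2 + y = ?c}"
  proof (intro set_eqI iffI)
    fix x assume "x \<in> {x. x \<noteq> 0 \<and> x + inverse x = \<beta>}"
    then have "x / \<beta> \<in> {y. y ^ 2 + y = ?c}" and "x = \<beta> * (x / \<beta>)"
      using assms by (simp_all add: equation)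
    then show "x \<in> (\<lambda>y. \<beta> * y) ` {y. y ^ 2 + y = ?c}"
      by blast
  qed (use assms in \<open>auto simp: equation\<close>)
  moreover have "inj_on (\<lambda>y. \<beta> * y) A" for A
    using assms by (auto intro: inj_onI)
  ultimately have "recip_sum_count \<beta> = card {y. y ^ 2 + y = ?c}"
    by (simp add: recip_sum_count_def card_image)
  then show ?thesis
    by (simp add: card_artin_schreier abs_tr_power2)
qed

lemma trace_count_0: "trace_count (0::'a) = CARD('a)^2"
  by (cases "CARD('a)")
     (simp_all add: trace_count_def card_SL2_trace_eq recip_sum_count_0 power2_eq_square)

lemma trace_count_abs_tr_0:
  "\<beta> \<noteq> 0 \<Longrightarrow> abs_tr r (inverse \<beta>) = 0 \<Longrightarrow> trace_count (\<beta>::'a) = CARD('a)^2 + CARD('a)"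
  by (cases "CARD('a)")
     (simp_all add: trace_count_def card_SL2_trace_eq recip_sum_count_nonzero power2_eq_square)

lemma trace_count_abs_tr_1:
  "\<beta> \<noteq> 0 \<Longrightarrow> abs_tr r (inverse \<beta>) = 1 \<Longrightarrow> trace_count (\<beta>::'a) = CARD('a)^2 - CARD('a)"
  by (simp add: trace_count_def card_SL2_trace_eq recip_sum_count_nonzero
      power2_eq_square diff_mult_distrib2)

lemma sum_SL2_lam_trace:
  assumes "(a::'a) \<noteq> 0"
  shows "(\<Sum>g\<in>SL2 TYPE('a). lam r (a * trace g)) = int CARD('a) * kloosterman r (a^2)"
proof -
  let ?q = "int CARD('a)"
  have count: "int (trace_count \<beta>) = ?q * (?q - 1) + ?q * int (recip_sum_count \<beta>)" for \<beta> :: 'a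
    using finite_UNIV_card_ge_0[where 'a='a]
    by (simp add: trace_count_def card_SL2_trace_eq of_nat_diff)
  have "(\<Sum>g\<in>SL2 TYPE('a). lam r (a * trace g)) = (\<Sum>\<beta>\<in>UNIV. int (trace_count \<beta>) * lam r (a * \<beta>))"
    by (rule sum_SL2_trace)
  also have "\<dots> = (\<Sum>\<beta>\<in>UNIV. (?q * (?q - 1) + ?q * int (recip_sum_count \<beta>)) * lam r (a * \<beta>))"
    by (simp only: count)
  also have "\<dots> = ?q * (?q - 1) * (\<Sum>\<beta>\<in>UNIV. lam r (a * \<beta>))
                 + ?q * (\<Sum>\<beta>\<in>UNIV. int (recip_sum_count \<beta>) * lam r (a * \<beta>))"
    by (simp add: distrib_right sum.distrib sum_distrib_left mult.assoc)
  also have "\<dots> = ?q * (\<Sum>x\<in>UNIV - {0}. lam r (a * (x + inverse x)))"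
    using assms by (simp add: sum_lam_mult sum_recip_sum_count)
  also have "(\<Sum>x\<in>UNIV - {0}. lam r (a * (x + inverse x))) = kloosterman r (a^2)"
  proof -
    have "bij_betw (\<lambda>x. a * x) (UNIV - {0}) (UNIV - {0})"
      by (rule bij_betwI[where g="\<lambda>x. inverse a * x"]) (use assms in auto)
    then have "kloosterman r (a^2) = (\<Sum>x\<in>UNIV - {0}. lam r (a * x + a^2 * inverse (a * x)))"
      unfolding kloosterman_def
      using sum.reindex_bij_betw[of "\<lambda>x. a * x" "UNIV - {0}" "UNIV - {0}"
          "\<lambda>\<alpha>. lam r (\<alpha> + a^2 * inverse \<alpha>)"] by simp
    also have "\<dots> = (\<Sum>x\<in>UNIV - {0}. lam r (a * (x + inverse x)))"
      using assms by (intro sum.cong refl) (simp add: power2_eq_square field_simps)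
    finally show ?thesis ..
  qed
  finally show ?thesis .
qed

end

section \<open>Counting subsets\<close>

lemma card_supersets_of_card:
  assumes A: "finite A" and U: "U \<subseteq> A"
  shows "card {T. T \<subseteq> A \<and> card T = t \<and> U \<subseteq> T}
         = (if card U \<le> t then (card A - card U) choose (t - card U) else 0)"
proof (cases "card U \<le> t")
  case False
  have "card U \<le> card T" if "T \<subseteq> A" and "U \<subseteq> T" for T
    using that A by (intro card_mono) (auto intro: finite_subset)
  then have "{T. T \<subseteq> A \<and> card T = t \<and> U \<subseteq> T} = {}"
    using False by fastforce
  then show ?thesis
    by (simp only: card.empty False if_False)
next
  case True
  have fU: "finite U"
    using A U by (rule finite_subset[rotated])
  have "bij_betw (\<lambda>T. T - U) {T. T \<subseteq> A \<and> card T = t \<and> U \<subseteq> T}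
          {W. W \<subseteq> A - U \<and> card W = t - card U}"
  proof (rule bij_betwI[where g="\<lambda>W. W \<union> U"])
    show "(\<lambda>T. T - U) \<in> {T. T \<subseteq> A \<and> card T = t \<and> U \<subseteq> T} \<rightarrow> {W. W \<subseteq> A - U \<and> card W = t - card U}"
    proof
      fix T assume T: "T \<in> {T. T \<subseteq> A \<and> card T = t \<and> U \<subseteq> T}"
      then have "finite T"
        using A by (auto intro: finite_subset)
      with T fU show "T - U \<in> {W. W \<subseteq> A - U \<and> card W = t - card U}"
        by (auto simp: card_Diff_subset)
    qed
    show "(\<lambda>W. W \<union> U) \<in> {W. W \<subseteq> A - U \<and> card W = t - card U} \<rightarrow> {T. T \<subseteq> A \<and> card T = t \<and> U \<subseteq> T}"
    proof
      fix W assume W: "W \<in> {W. W \<subseteq> A - U \<and> card W = t - card U}"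
      then have "finite W"
        using A by (auto intro: finite_subset)
      then have "card (W \<union> U) = card W + card U"
        using W fU by (intro card_Un_disjoint) auto
      with W U True show "W \<union> U \<in> {T. T \<subseteq> A \<and> card T = t \<and> U \<subseteq> T}"
        by auto
    qed
  qed auto
  then have "card {T. T \<subseteq> A \<and> card T = t \<and> U \<subseteq> T} = card {W. W \<subseteq> A - U \<and> card W = t - card U}"
    by (rule bij_betw_same_card)
  also have "\<dots> = card (A - U) choose (t - card U)"
    using A by (intro n_subsets) simp
  finally show ?thesis
    using True U fU by (simp add: card_Diff_subset)
qed

lemma card_subsets_fibre_cards:
  fixes f :: "'b \<Rightarrow> 'c::finite"
  assumes A: "finite A"
  shows "card {U. U \<subseteq> A \<and> (\<forall>\<beta>. card {x\<in>U. f x = \<beta>} = \<nu> \<beta>)}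
         = (\<Prod>\<beta>\<in>UNIV. card {x\<in>A. f x = \<beta>} choose \<nu> \<beta>)"
proof -
  let ?S = "{U. U \<subseteq> A \<and> (\<forall>\<beta>. card {x\<in>U. f x = \<beta>} = \<nu> \<beta>)}"
  let ?B = "\<lambda>\<beta>. {W. W \<subseteq> {x\<in>A. f x = \<beta>} \<and> card W = \<nu> \<beta>}"
  let ?split = "\<lambda>U \<beta>. {x\<in>U. f x = \<beta>}"
  have fibre_Union: "{x\<in>\<Union>\<gamma>. F \<gamma>. f x = \<beta>} = F \<beta>" if "F \<in> PiE UNIV ?B" for F \<beta>
  proof -
    have "F \<gamma> \<subseteq> {x\<in>A. f x = \<gamma>}" for \<gamma>
      using that by auto
    then show ?thesis by blast
  qed
  have "bij_betw ?split ?S (PiE UNIV ?B)"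
  proof (rule bij_betwI[where g="\<lambda>F. \<Union>\<gamma>. F \<gamma>"])
    show "?split \<in> ?S \<rightarrow> PiE UNIV ?B"
      by (auto simp: PiE_UNIV_domain)
    show "(\<lambda>F. \<Union>\<gamma>. F \<gamma>) \<in> PiE UNIV ?B \<rightarrow> ?S"
    proof
      fix F assume F: "F \<in> PiE UNIV ?B"
      have "card {x\<in>\<Union>\<gamma>. F \<gamma>. f x = \<beta>} = \<nu> \<beta>" for \<beta>
        unfolding fibre_Union[OF F] using F by auto
      moreover have "(\<Union>\<gamma>. F \<gamma>) \<subseteq> A"
        using F by auto
      ultimately show "(\<Union>\<gamma>. F \<gamma>) \<in> ?S"
        by blast
    qed
    show "(\<Union>\<gamma>. ?split U \<gamma>) = U" for U
      by blast
    show "?split (\<Union>\<gamma>. F \<gamma>) = F" if "F \<in> PiE UNIV ?B" for F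
      using fibre_Union[OF that] by auto
  qed
  then have "card ?S = card (PiE UNIV ?B)"
    by (rule bij_betw_same_card)
  also have "\<dots> = (\<Prod>\<beta>\<in>UNIV. card (?B \<beta>))"
    by (rule card_PiE) simp
  also have "\<dots> = (\<Prod>\<beta>\<in>UNIV. card {x\<in>A. f x = \<beta>} choose \<nu> \<beta>)"
    using A by (simp add: n_subsets)
  finally show ?thesis .
qed

lemma ibinom_diff_eq:
  assumes "i \<le> N"
  shows "ibinom (int N - int i) (int N - int t) = (if i \<le> t then (N - i) choose (t - i) else 0)"
proof -
  consider "t < i" | "i \<le> t" "t \<le> N" | "N < t"
    by linarith
  then show ?thesis
  proof cases
    case 2
    then have "ibinom (int N - int i) (int N - int t) = (N - i) choose (N - t)"
      by (simp add: ibinom_def nat_diff_distrib)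
    also have "\<dots> = (N - i) choose ((N - i) - (N - t))"
      using 2 by (intro binomial_symmetric) simp
    finally show ?thesis
      using 2 by simp
  qed (use assms in \<open>simp_all add: ibinom_def binomial_eq_0\<close>)
qed

lemma sum_subsets_sum_Pow:
  fixes F :: "'b set \<Rightarrow> 'c::comm_semiring_1"
  assumes "finite A"
  shows "(\<Sum>T\<in>{T. T \<subseteq> A \<and> card T = t}. \<Sum>U\<in>Pow T. F U)
       = (\<Sum>U\<in>Pow A. of_nat (card {T. T \<subseteq> A \<and> card T = t \<and> U \<subseteq> T}) * F U)"
proof -
  let ?T = "{T. T \<subseteq> A \<and> card T = t}"
  have fin: "finite ?T"
    by (rule finite_subset[of _ "Pow A"]) (use assms in auto)
  have "(\<Sum>T\<in>?T. \<Sum>U\<in>Pow T. F U) = (\<Sum>T\<in>?T. \<Sum>U\<in>Pow A. if U \<subseteq> T then F U else 0)"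
  proof (rule sum.cong[OF refl])
    fix T assume "T \<in> ?T"
    then have "Pow T = {U\<in>Pow A. U \<subseteq> T}"
      by auto
    then have "(\<Sum>U\<in>Pow T. F U) = (\<Sum>U\<in>{U\<in>Pow A. U \<subseteq> T}. F U)"
      by simp
    also have "\<dots> = (\<Sum>U\<in>Pow A. if U \<subseteq> T then F U else 0)"
      by (rule sum.inter_filter) (simp add: assms)
    finally show "(\<Sum>U\<in>Pow T. F U) = (\<Sum>U\<in>Pow A. if U \<subseteq> T then F U else 0)" .
  qed
  also have "\<dots> = (\<Sum>U\<in>Pow A. \<Sum>T\<in>?T. if U \<subseteq> T then F U else 0)"
    by (rule sum.swap)
  also have "\<dots> = (\<Sum>U\<in>Pow A. of_nat (card {T\<in>?T. U \<subseteq> T}) * F U)"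
    using fin by (simp add: sum.If_cases Int_def)
  finally show ?thesis
    by (simp add: conj_assoc)
qed

lemma sum_Pow_by_card:
  fixes g :: "'b set \<Rightarrow> 'c::comm_semiring_1"
  assumes "finite A"
  shows "(\<Sum>U\<in>Pow A. f (card U) * g U) = (\<Sum>i\<le>card A. f i * (\<Sum>U\<in>{U. U \<subseteq> A \<and> card U = i}. g U))"
proof -
  have "(\<Sum>U\<in>Pow A. f (card U) * g U) = (\<Sum>i\<le>card A. \<Sum>U\<in>{U\<in>Pow A. card U = i}. f (card U) * g U)"
    using assms by (intro sum.group[symmetric]) (auto intro: card_mono)
  also have "\<dots> = (\<Sum>i\<le>card A. f i * (\<Sum>U\<in>{U. U \<subseteq> A \<and> card U = i}. g U))"
    by (simp add: sum_distrib_left)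
  finally show ?thesis .
qed

lemma ibinom_eq_0: "t < i \<Longrightarrow> ibinom (int N - int i) (int N - int t) = 0"
  by (simp add: ibinom_def)

lemma card_eq_sum_card_fibres:
  fixes v :: "'b \<Rightarrow> 'c::finite"
  assumes "finite U"
  shows "card U = (\<Sum>\<beta>\<in>UNIV. card {g\<in>U. v g = \<beta>})"
  using card_eq_sum[of U] sum.group[OF assms, of UNIV v "\<lambda>_. 1::nat"] by simp

lemma sum_eq_sum_card_fibres:
  fixes v :: "'b \<Rightarrow> 'c::{semiring_1,finite}"
  assumes "finite U"
  shows "sum v U = (\<Sum>\<beta>\<in>UNIV. of_nat (card {g\<in>U. v g = \<beta>}) * \<beta>)"
proof -
  have "sum v U = (\<Sum>\<beta>\<in>UNIV. \<Sum>g\<in>{g\<in>U. v g = \<beta>}. v g)"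
    using assms by (rule sum.group[symmetric]) simp_all
  also have "\<dots> = (\<Sum>\<beta>\<in>UNIV. of_nat (card {g\<in>U. v g = \<beta>}) * \<beta>)"
    by (intro sum.cong refl) simp
  finally show ?thesis .
qed

section \<open>Surjection numbers\<close>

text \<open>\<open>surj_num h t = t! S(h,t)\<close> counts the surjections from an \<open>h\<close>-set onto a \<open>t\<close>-set.\<close>

definition surj_num :: "nat \<Rightarrow> nat \<Rightarrow> int" where
  "surj_num h t = (\<Sum>j\<le>t. (-1) ^ (t - j) * int (t choose j) * int j ^ h)"

lemma of_int_surj_num: "real_of_int (surj_num h t) = fact t * stirling2 h t"
  by (simp add: surj_num_def stirling2_def atLeast0AtMost)

lemma surj_num_0_left: "surj_num 0 t = (if t = 0 then 1 else 0)"
proof -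
  have "surj_num 0 t = (\<Sum>j\<le>t. int (t choose j) * 1 ^ j * (-1) ^ (t - j))"
    by (simp add: surj_num_def mult.commute)
  also have "\<dots> = (1 + (-1)) ^ t"
    by (rule binomial_ring[symmetric])
  finally show ?thesis by simp
qed

lemma surj_num_Suc_0: "surj_num (Suc h) 0 = 0"
  by (simp add: surj_num_def)

lemma surj_num_Suc_Suc: "surj_num (Suc h) (Suc t) = int (Suc t) * (surj_num h (Suc t) + surj_num h t)"
proof -
  let ?c = "\<lambda>k. int (Suc k) ^ h"
  have shift1: "surj_num h (Suc t) = (-1) ^ Suc t * 0 ^ h
      + (\<Sum>k\<le>t. (-1) ^ (t - k) * int (Suc t choose Suc k) * ?c k)"
    unfolding surj_num_def by (subst sum.atMost_Suc_shift) simp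
  have "surj_num h t = (\<Sum>j\<le>Suc t. (-1) ^ (t - j) * int (t choose j) * int j ^ h)"
    unfolding surj_num_def by (simp add: sum.atMost_Suc)
  also have "\<dots> = (-1) ^ t * 0 ^ h + (\<Sum>k\<le>t. (-1) ^ (t - Suc k) * int (t choose Suc k) * ?c k)"
    by (subst sum.atMost_Suc_shift) simp
  finally have shift2: "surj_num h t
      = (-1) ^ t * 0 ^ h + (\<Sum>k\<le>t. (-1) ^ (t - Suc k) * int (t choose Suc k) * ?c k)" .
  have "surj_num h (Suc t) + surj_num h t = (\<Sum>k\<le>t. ((-1) ^ (t - k) * int (Suc t choose Suc k)
                  + (-1) ^ (t - Suc k) * int (t choose Suc k)) * ?c k)"
    unfolding shift1 shift2 by (simp add: sum.distrib algebra_simps)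
  also have "\<dots> = (\<Sum>k\<le>t. (-1) ^ (t - k) * int (t choose k) * ?c k)"
  proof (intro sum.cong refl)
    fix k assume "k \<in> {..t}"
    then have "(-1::int) ^ (t - k) * int (t choose Suc k) + (-1) ^ (t - Suc k) * int (t choose Suc k) = 0"
      by (cases "k = t") (simp_all add: Suc_diff_Suc[symmetric])
    then show "((-1) ^ (t - k) * int (Suc t choose Suc k) + (-1) ^ (t - Suc k) * int (t choose Suc k)) * ?c k
        = (-1) ^ (t - k) * int (t choose k) * ?c k"
      by (simp add: algebra_simps)
  qed
  finally have pascal: "surj_num h (Suc t) + surj_num h t
      = (\<Sum>k\<le>t. (-1) ^ (t - k) * int (t choose k) * ?c k)" .
  have "surj_num (Suc h) (Suc t)
      = (\<Sum>k\<le>t. (-1) ^ (t - k) * int (Suc t choose Suc k) * int (Suc k) * ?c k)"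
    unfolding surj_num_def by (subst sum.atMost_Suc_shift) (simp add: algebra_simps del: binomial_Suc_Suc)
  also have "\<dots> = (\<Sum>k\<le>t. int (Suc t) * ((-1) ^ (t - k) * int (t choose k) * ?c k))"
  proof (intro sum.cong refl)
    fix k
    have "int (Suc t choose Suc k) * int (Suc k) = int (Suc t) * int (t choose k)"
      using Suc_times_binomial[of k t] by (simp only: of_nat_mult[symmetric] mult.commute)
    then show "(-1) ^ (t - k) * int (Suc t choose Suc k) * int (Suc k) * ?c k
        = int (Suc t) * ((-1) ^ (t - k) * int (t choose k) * ?c k)"
      by (metis (no_types, lifting) mult.assoc mult.left_commute)
  qed
  also have "\<dots> = int (Suc t) * (surj_num h (Suc t) + surj_num h t)"
    by (simp add: pascal sum_distrib_left)
  finally show ?thesis .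
qed

lemma surj_num_eq_0: "h < t \<Longrightarrow> surj_num h t = 0"
proof (induction h arbitrary: t)
  case 0
  then show ?case by (simp add: surj_num_0_left)
next
  case (Suc h)
  then obtain t' where "t = Suc t'"
    by (cases t) auto
  with Suc show ?case
    by (simp add: surj_num_Suc_Suc)
qed

lemma of_nat_mult_choose:
  "int w * int (w choose t) = int t * int (w choose t) + int (Suc t) * int (w choose Suc t)"
proof (cases "t \<le> w")
  case True
  have "(w - t) * (w choose t) = Suc t * (w choose Suc t)"
    by (simp only: binomial_absorb_comp binomial_absorption)
  then have "int (w - t) * int (w choose t) = int (Suc t) * int (w choose Suc t)"
    by (metis of_nat_mult)
  then show ?thesis
    using True by (simp add: of_nat_diff algebra_simps)
qed (simp add: binomial_eq_0)

text \<open>Counting the maps from an \<open>h\<close>-set to a \<open>w\<close>-set by their image.\<close>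

lemma power_eq_sum_surj_num_choose: "int w ^ h = (\<Sum>t\<le>h. surj_num h t * int (w choose t))"
proof (induction h)
  case 0
  then show ?case by (simp add: surj_num_0_left)
next
  case (Suc h)
  have "int w ^ Suc h = (\<Sum>t\<le>h. surj_num h t * (int w * int (w choose t)))"
    using Suc by (simp add: sum_distrib_left algebra_simps)
  also have "\<dots> = (\<Sum>t\<le>h. int t * surj_num h t * int (w choose t))
                 + (\<Sum>t\<le>h. int (Suc t) * surj_num h t * int (w choose Suc t))"
    by (simp add: of_nat_mult_choose sum.distrib algebra_simps)
  also have "(\<Sum>t\<le>h. int t * surj_num h t * int (w choose t))
             = (\<Sum>t\<le>Suc h. int t * surj_num h t * int (w choose t))"
    by (simp add: surj_num_eq_0)
  also have "\<dots> = (\<Sum>t\<le>h. int (Suc t) * surj_num h (Suc t) * int (w choose Suc t))"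
    by (subst sum.atMost_Suc_shift) simp
  also have "\<dots> + (\<Sum>t\<le>h. int (Suc t) * surj_num h t * int (w choose Suc t))
             = (\<Sum>t\<le>h. surj_num (Suc h) (Suc t) * int (w choose Suc t))"
    by (simp add: surj_num_Suc_Suc sum.distrib[symmetric] algebra_simps)
  also have "\<dots> = (\<Sum>t\<le>Suc h. surj_num (Suc h) t * int (w choose t))"
    by (subst sum.atMost_Suc_shift) (simp add: surj_num_Suc_0)
  finally show ?case .
qed

section \<open>Power moments of the weights of a binary trace code\<close>

text \<open>The code of all \<open>u \<in> \<bbbF>\<^sub>2\<^sup>V\<close> with \<open>\<Sum>\<^sub>g u(g) v(g) = 0\<close>; its words of weight \<open>i\<close>
  are the \<open>i\<close>-subsets of \<open>V\<close> on which \<open>v\<close> sums to zero.\<close>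

locale char2_code = char2_finite_field r TY for r and TY :: "'a::{field,finite} itself" +
  fixes V :: "'b set" and v :: "'b \<Rightarrow> 'a"
  assumes finite_V: "finite V"
begin

definition zero_sum_count :: "nat \<Rightarrow> nat" where
  "zero_sum_count i = card {U. U \<subseteq> V \<and> card U = i \<and> sum v U = 0}"

text \<open>The support of the codeword \<open>g \<mapsto> tr(a v(g))\<close> of the dual code.\<close>

definition char_support :: "'a \<Rightarrow> 'b set" where
  "char_support a = {g\<in>V. lam r (a * v g) = -1}"

lemma sum_lam_eq_card_minus_card_char_support:
  "(\<Sum>g\<in>V. lam r (a * v g)) = int (card V) - 2 * int (card (char_support a))"
proof -
  have "(\<Sum>g\<in>V. lam r (a * v g)) = (\<Sum>g\<in>V. 1 - 2 * of_bool (g \<in> char_support a))"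
    using lam_eq_1_or_minus_1 by (intro sum.cong refl) (fastforce simp: char_support_def)
  also have "\<dots> = int (card V) - 2 * int (card (char_support a))"
    using finite_V by (simp add: sum_subtractf sum_distrib_left sum.If_cases char_support_def Int_def)
  finally show ?thesis .
qed

lemma prod_one_minus_lam:
  assumes "T \<subseteq> V"
  shows "(\<Prod>g\<in>T. 1 - lam r (a * v g)) = (if T \<subseteq> char_support a then 2 ^ card T else 0)"
  using finite_subset[OF assms finite_V] assms
proof (induction T rule: finite_induct)
  case (insert x F)
  then show ?case
    using lam_eq_1_or_minus_1[of "a * v x"] by (auto simp: char_support_def)
qed simp

text \<open>Expanding the product and summing the character over \<open>a\<close> picks out the zero-sum subsets.\<close>

lemma card_char_support_superset:
  assumes "T \<subseteq> V"
  shows "2 ^ card T * int (card {a. T \<subseteq> char_support a})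
         = int CARD('a) * (\<Sum>U\<in>Pow T. (-1) ^ card U * of_bool (sum v U = 0))"
proof -
  have fin: "finite T"
    using assms finite_V by (rule finite_subset)
  have "2 ^ card T * int (card {a. T \<subseteq> char_support a})
        = (\<Sum>a\<in>UNIV. \<Prod>g\<in>T. - lam r (a * v g) + 1)"
    using prod_one_minus_lam[OF assms] by (simp add: sum.If_cases)
  also have "\<dots> = (\<Sum>a\<in>UNIV. \<Sum>U\<in>Pow T. (\<Prod>g\<in>U. - lam r (a * v g)) * (\<Prod>g\<in>T - U. 1))"
    using fin by (intro sum.cong refl prod_add)
  also have "\<dots> = (\<Sum>a\<in>UNIV. \<Sum>U\<in>Pow T. (-1) ^ card U * lam r (a * sum v U))"
    by (intro sum.cong refl) (simp add: prod_uminus lam_sum sum_distrib_left)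
  also have "\<dots> = (\<Sum>U\<in>Pow T. \<Sum>a\<in>UNIV. (-1) ^ card U * lam r (a * sum v U))"
    by (rule sum.swap)
  also have "\<dots> = int CARD('a) * (\<Sum>U\<in>Pow T. (-1) ^ card U * of_bool (sum v U = 0))"
  proof -
    have "(\<Sum>a\<in>UNIV. lam r (a * s)) = (if s = 0 then int CARD('a) else 0)" for s :: 'a
      using sum_lam_mult[of s] by (simp add: mult.commute)
    then have "(-1) ^ card U * (\<Sum>a\<in>UNIV. lam r (a * sum v U))
               = int CARD('a) * ((-1) ^ card U * of_bool (sum v U = 0))" for U
      by simp
    then show ?thesis
      by (simp add: sum_distrib_left)
  qed
  finally show ?thesis .
qed

lemma sum_card_char_support_choose:
  "(\<Sum>a\<in>UNIV. card (char_support a) choose t) = (\<Sum>T\<in>{T. T \<subseteq> V \<and> card T = t}. card {a. T \<subseteq> char_support a})"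
proof -
  let ?T = "{T. T \<subseteq> V \<and> card T = t}"
  have fin: "finite ?T"
    by (rule finite_subset[of _ "Pow V"]) (use finite_V in auto)
  have "card (char_support a) choose t = (\<Sum>T\<in>?T. of_bool (T \<subseteq> char_support a))" for a
  proof -
    have "card (char_support a) choose t = card {T. T \<subseteq> char_support a \<and> card T = t}"
      using finite_V by (intro n_subsets[symmetric]) (simp add: char_support_def)
    also have "{T. T \<subseteq> char_support a \<and> card T = t} = ?T \<inter> {T. T \<subseteq> char_support a}"
      by (auto simp: char_support_def)
    finally show ?thesis
      using fin by simp
  qed
  then have "(\<Sum>a\<in>UNIV. card (char_support a) choose t) = (\<Sum>T\<in>?T. \<Sum>a\<in>UNIV. of_bool (T \<subseteq> char_support a))"
    by (simp only: sum.swap[of _ UNIV])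
  then show ?thesis
    by simp
qed

lemma sum_card_char_support_choose_eq:
  "2 ^ t * (\<Sum>a\<in>UNIV. int (card (char_support a) choose t))
   = int CARD('a) * (\<Sum>i\<le>card V. (-1) ^ i * int (zero_sum_count i)
                       * int (ibinom (int (card V) - int i) (int (card V) - int t)))"
proof -
  let ?N = "card V"
  let ?F = "\<lambda>U. (-1) ^ card U * of_bool (sum v U = 0) :: int"
  have "2 ^ t * (\<Sum>a\<in>UNIV. int (card (char_support a) choose t))
        = 2 ^ t * int (\<Sum>T\<in>{T. T \<subseteq> V \<and> card T = t}. card {a. T \<subseteq> char_support a})"
    by (simp only: sum_card_char_support_choose flip: of_nat_sum)
  also have "\<dots> = (\<Sum>T\<in>{T. T \<subseteq> V \<and> card T = t}. 2 ^ card T * int (card {a. T \<subseteq> char_support a}))"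
    unfolding of_nat_sum sum_distrib_left by (intro sum.cong) auto
  also have "\<dots> = (\<Sum>T\<in>{T. T \<subseteq> V \<and> card T = t}. int CARD('a) * (\<Sum>U\<in>Pow T. ?F U))"
    by (rule sum.cong[OF refl], rule card_char_support_superset) simp
  also have "\<dots> = int CARD('a) * (\<Sum>T\<in>{T. T \<subseteq> V \<and> card T = t}. \<Sum>U\<in>Pow T. ?F U)"
    by (rule sum_distrib_left[symmetric])
  also have "\<dots> = int CARD('a) * (\<Sum>U\<in>Pow V. int (card {T. T \<subseteq> V \<and> card T = t \<and> U \<subseteq> T}) * ?F U)"
    by (simp add: sum_subsets_sum_Pow finite_V)
  also have "(\<Sum>U\<in>Pow V. int (card {T. T \<subseteq> V \<and> card T = t \<and> U \<subseteq> T}) * ?F U)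
             = (\<Sum>U\<in>Pow V. ((-1) ^ card U * int (ibinom (int ?N - int (card U)) (int ?N - int t)))
                              * of_bool (sum v U = 0))"
    using finite_V
    by (intro sum.cong refl) (simp add: card_supersets_of_card ibinom_diff_eq card_mono)
  also have "\<dots> = (\<Sum>i\<le>?N. ((-1) ^ i * int (ibinom (int ?N - int i) (int ?N - int t)))
                                  * (\<Sum>U\<in>{U. U \<subseteq> V \<and> card U = i}. of_bool (sum v U = 0)))"
    by (rule sum_Pow_by_card[OF finite_V])
  also have "\<dots> = (\<Sum>i\<le>?N. (-1) ^ i * int (zero_sum_count i) * int (ibinom (int ?N - int i) (int ?N - int t)))"
  proof -
    have "finite {U. U \<subseteq> V \<and> card U = i}" for i
      by (rule finite_subset[of _ "Pow V"]) (use finite_V in auto)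
    then show ?thesis
      by (simp add: zero_sum_count_def Int_def conj_assoc mult_ac)
  qed
  finally show ?thesis .
qed

lemma sum_power_card_char_support:
  "(\<Sum>a\<in>UNIV. (2 * int (card (char_support a))) ^ h)
   = int CARD('a) * (\<Sum>i\<le>card V. (-1) ^ i * int (zero_sum_count i)
       * (\<Sum>t\<le>h. surj_num h t * 2 ^ (h - t) * int (ibinom (int (card V) - int i) (int (card V) - int t))))"
proof -
  let ?b = "\<lambda>i t. int (ibinom (int (card V) - int i) (int (card V) - int t))"
  have "(2 * int w) ^ h = (\<Sum>t\<le>h. surj_num h t * 2 ^ (h - t) * (2 ^ t * int (w choose t)))" for w
  proof -
    have "(2 * int w) ^ h = (\<Sum>t\<le>h. 2 ^ h * (surj_num h t * int (w choose t)))"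
      by (simp add: power_mult_distrib power_eq_sum_surj_num_choose sum_distrib_left)
    also have "\<dots> = (\<Sum>t\<le>h. surj_num h t * 2 ^ (h - t) * (2 ^ t * int (w choose t)))"
      by (intro sum.cong refl) (simp add: power_add[symmetric])
    finally show ?thesis .
  qed
  then have "(\<Sum>a\<in>UNIV. (2 * int (card (char_support a))) ^ h)
        = (\<Sum>t\<le>h. surj_num h t * 2 ^ (h - t) * (2 ^ t * (\<Sum>a\<in>UNIV. int (card (char_support a) choose t))))"
    by (simp add: sum.swap[of _ UNIV] sum_distrib_left)
  also have "\<dots> = (\<Sum>t\<le>h. surj_num h t * 2 ^ (h - t)
                   * (int CARD('a) * (\<Sum>i\<le>card V. (-1) ^ i * int (zero_sum_count i) * ?b i t)))"
    by (simp only: sum_card_char_support_choose_eq)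
  also have "\<dots> = (\<Sum>t\<le>h. \<Sum>i\<le>card V. int CARD('a)
                   * ((-1) ^ i * int (zero_sum_count i) * (surj_num h t * 2 ^ (h - t) * ?b i t)))"
    by (simp add: sum_distrib_left mult_ac)
  also have "\<dots> = int CARD('a) * (\<Sum>i\<le>card V. (-1) ^ i * int (zero_sum_count i)
                   * (\<Sum>t\<le>h. surj_num h t * 2 ^ (h - t) * ?b i t))"
    by (subst sum.swap) (simp add: sum_distrib_left)
  finally show ?thesis .
qed

end

section \<open>The code \<open>C(SL(2,q))\<close>\<close>

lemma Cw_eq_card_zero_trace_subsets:
  "Cw TYPE('a::{field,finite}) i = card {U. U \<subseteq> SL2 TYPE('a) \<and> card U = i \<and> (\<Sum>g\<in>U. trace g) = 0}"
proof -
  let ?G = "SL2 TYPE('a)"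
  let ?C = "{u \<in> code_SL2 TYPE('a). hweight TYPE('a) u = i}"
  let ?T = "{U. U \<subseteq> ?G \<and> card U = i \<and> (\<Sum>g\<in>U. trace g) = 0}"
  let ?supp = "\<lambda>u::'a^2^2 \<Rightarrow> 'a. {g\<in>?G. u g \<noteq> 0}"
  let ?ind = "\<lambda>U. (\<lambda>g::'a^2^2. if g \<in> ?G then (of_bool (g \<in> U) :: 'a) else undefined)"
  have sum_word: "(\<Sum>g\<in>?G. u g * trace g) = (\<Sum>g\<in>?supp u. trace g)" if "u \<in> ?G \<rightarrow>\<^sub>E {0, 1}" for u
  proof -
    have "(\<Sum>g\<in>?G. u g * trace g) = (\<Sum>g\<in>?G. if u g \<noteq> 0 then trace g else 0)"
      using that by (intro sum.cong refl) auto
    also have "\<dots> = (\<Sum>g\<in>?supp u. trace g)"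
      by (simp add: sum.inter_filter)
    finally show ?thesis .
  qed
  have supp_ind: "?supp (?ind U) = U" if "U \<subseteq> ?G" for U
    using that by auto
  have "bij_betw ?supp ?C ?T"
  proof (rule bij_betwI[where g="?ind"])
    show "?supp \<in> ?C \<rightarrow> ?T"
      using sum_word by (auto simp: code_SL2_def hweight_def)
    show "?ind \<in> ?T \<rightarrow> ?C"
    proof
      fix U assume U: "U \<in> ?T"
      have word: "?ind U \<in> ?G \<rightarrow>\<^sub>E {0, 1}"
        by auto
      moreover have "?supp (?ind U) = U"
        using U supp_ind by simp
      ultimately show "?ind U \<in> ?C"
        using sum_word[OF word] U by (auto simp: code_SL2_def hweight_def)
    qed
    show "?ind (?supp u) = u" if "u \<in> ?C" for u
    proof
      fix g
      have "u \<in> ?G \<rightarrow>\<^sub>E {0, 1}"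
        using that by (auto simp: code_SL2_def)
      then show "?ind (?supp u) g = u g"
        by (cases "g \<in> ?G") (auto simp: PiE_def extensional_def)
    qed
    show "?supp (?ind U) = U" if "U \<in> ?T" for U
      using that supp_ind by auto
  qed
  then show ?thesis
    unfolding Cw_def by (rule bij_betw_same_card)
qed

text \<open>Sorting a zero-sum subset by the values of \<open>v\<close> gives a family \<open>\<nu>\<close> with \<open>\<Sum> \<nu>(\<beta>) \<beta> = 0\<close>.\<close>

lemma card_zero_sum_subsets:
  fixes v :: "'b \<Rightarrow> 'a::{semiring_1,finite}"
  assumes V: "finite V"
  shows "card {U. U \<subseteq> V \<and> card U = i \<and> sum v U = 0}
         = (\<Sum>\<nu>\<in>{\<nu> :: 'a \<Rightarrow> nat. (\<forall>\<beta>. \<nu> \<beta> \<le> i) \<and> (\<Sum>\<beta>\<in>UNIV. \<nu> \<beta>) = i \<and> (\<Sum>\<beta>\<in>UNIV. of_nat (\<nu> \<beta>) * \<beta>) = 0}.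
              \<Prod>\<beta>\<in>UNIV. card {g\<in>V. v g = \<beta>} choose \<nu> \<beta>)"
proof -
  let ?X = "{U. U \<subseteq> V \<and> card U = i \<and> sum v U = 0}"
  let ?S = "{\<nu> :: 'a \<Rightarrow> nat. (\<forall>\<beta>. \<nu> \<beta> \<le> i) \<and> (\<Sum>\<beta>\<in>UNIV. \<nu> \<beta>) = i \<and> (\<Sum>\<beta>\<in>UNIV. of_nat (\<nu> \<beta>) * \<beta>) = 0}"
  let ?profile = "\<lambda>U \<beta>. card {g\<in>U. v g = \<beta>}"
  have fin: "finite U" if "U \<subseteq> V" for U
    using V that by (rule finite_subset[rotated])
  have card_eq: "card U = (\<Sum>\<beta>\<in>UNIV. ?profile U \<beta>)" if "U \<subseteq> V" for U
    using fin[OF that] by (rule card_eq_sum_card_fibres)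
  have sum_eq: "sum v U = (\<Sum>\<beta>\<in>UNIV. of_nat (?profile U \<beta>) * \<beta>)" if "U \<subseteq> V" for U
    using fin[OF that] by (rule sum_eq_sum_card_fibres)
  have profile_le: "?profile U \<beta> \<le> card U" if "U \<subseteq> V" for U \<beta>
    using fin[OF that] by (intro card_mono) auto
  have fin_Pi: "finite (PiE (UNIV::'a set) (\<lambda>_. {..i}))"
    by (rule finite_PiE) auto
  have fin_S: "finite ?S"
    by (rule finite_subset[OF _ fin_Pi]) (auto simp: PiE_UNIV_domain)
  have fibres: "{U\<in>?X. ?profile U = \<nu>} = {U. U \<subseteq> V \<and> (\<forall>\<beta>. ?profile U \<beta> = \<nu> \<beta>)}" if "\<nu> \<in> ?S" for \<nu>
    using that card_eq sum_eq by (auto simp: fun_eq_iff)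
  have fin_X: "finite ?X"
    by (rule finite_subset[of _ "Pow V"]) (use V in auto)
  have "?profile ` ?X \<subseteq> ?S"
  proof
    fix \<nu> assume "\<nu> \<in> ?profile ` ?X"
    then obtain U where U: "U \<subseteq> V" "card U = i" "sum v U = 0" and \<nu>: "\<nu> = ?profile U"
      by auto
    have "\<forall>\<beta>. \<nu> \<beta> \<le> i"
      using profile_le[OF U(1)] U(2) \<nu> by simp
    moreover have "(\<Sum>\<beta>\<in>UNIV. \<nu> \<beta>) = i"
      using card_eq[OF U(1)] U(2) \<nu> by simp
    moreover have "(\<Sum>\<beta>\<in>UNIV. of_nat (\<nu> \<beta>) * \<beta>) = 0"
      using sum_eq[OF U(1)] U(3) \<nu> by simp
    ultimately show "\<nu> \<in> ?S"
      by simp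
  qed
  then have "card ?X = (\<Sum>\<nu>\<in>?S. \<Sum>U\<in>{U\<in>?X. ?profile U = \<nu>}. 1)"
    using sum.group[OF fin_X fin_S, of ?profile "\<lambda>_. 1::nat"] by simp
  also have "\<dots> = (\<Sum>\<nu>\<in>?S. card {U\<in>?X. ?profile U = \<nu>})"
    by simp
  also have "\<dots> = (\<Sum>\<nu>\<in>?S. \<Prod>\<beta>\<in>UNIV. card {g\<in>V. v g = \<beta>} choose \<nu> \<beta>)"
  proof (rule sum.cong[OF refl])
    fix \<nu> assume "\<nu> \<in> ?S"
    show "card {U\<in>?X. ?profile U = \<nu>} = (\<Prod>\<beta>\<in>UNIV. card {g\<in>V. v g = \<beta>} choose \<nu> \<beta>)"
      unfolding fibres[OF \<open>\<nu> \<in> ?S\<close>] using V by (rule card_subsets_fibre_cards)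
  qed
  finally show ?thesis .
qed

sublocale char2_finite_field \<subseteq> SL2_code: char2_code r TY "SL2 TYPE('a)" trace
  by unfold_locales simp

context char2_finite_field
begin

lemma prod_trace_count_choose:
  fixes \<nu> :: "'a \<Rightarrow> nat"
  shows "(\<Prod>\<beta>\<in>UNIV. trace_count \<beta> choose \<nu> \<beta>) =
     (CARD('a)^2 choose \<nu> 0)
   * (\<Prod>\<beta>\<in>{\<beta>. \<beta> \<noteq> 0 \<and> abs_tr r (inverse \<beta>) = 0}. (CARD('a)^2 + CARD('a)) choose \<nu> \<beta>)
   * (\<Prod>\<beta>\<in>{\<beta>. \<beta> \<noteq> 0 \<and> abs_tr r (inverse \<beta>) = 1}. (CARD('a)^2 - CARD('a)) choose \<nu> \<beta>)"
proof -
  let ?A0 = "{\<beta>::'a. \<beta> \<noteq> 0 \<and> abs_tr r (inverse \<beta>) = 0}"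
  let ?A1 = "{\<beta>::'a. \<beta> \<noteq> 0 \<and> abs_tr r (inverse \<beta>) = 1}"
  have "(UNIV::'a set) = {0} \<union> (?A0 \<union> ?A1)"
    using abs_tr_0_or_1 by blast
  then have "(\<Prod>\<beta>\<in>UNIV. trace_count \<beta> choose \<nu> \<beta>)
             = (\<Prod>\<beta>\<in>{0} \<union> (?A0 \<union> ?A1). trace_count \<beta> choose \<nu> \<beta>)"
    by (simp only:)
  also have "\<dots> = (\<Prod>\<beta>\<in>{0}. trace_count \<beta> choose \<nu> \<beta>) * (\<Prod>\<beta>\<in>?A0 \<union> ?A1. trace_count \<beta> choose \<nu> \<beta>)"
    by (rule prod.union_disjoint) auto
  also have "(\<Prod>\<beta>\<in>?A0 \<union> ?A1. trace_count \<beta> choose \<nu> \<beta>)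
             = (\<Prod>\<beta>\<in>?A0. trace_count \<beta> choose \<nu> \<beta>) * (\<Prod>\<beta>\<in>?A1. trace_count \<beta> choose \<nu> \<beta>)"
    by (rule prod.union_disjoint) auto
  also have "(\<Prod>\<beta>\<in>?A0. trace_count \<beta> choose \<nu> \<beta>) = (\<Prod>\<beta>\<in>?A0. (CARD('a)^2 + CARD('a)) choose \<nu> \<beta>)"
    by (intro prod.cong refl) (simp add: trace_count_abs_tr_0)
  also have "(\<Prod>\<beta>\<in>?A1. trace_count \<beta> choose \<nu> \<beta>) = (\<Prod>\<beta>\<in>?A1. (CARD('a)^2 - CARD('a)) choose \<nu> \<beta>)"
    by (intro prod.cong refl) (simp add: trace_count_abs_tr_1)
  finally show ?thesis
    by (simp add: trace_count_0 mult.assoc)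
qed

lemma Cw_eq_sum_prod_choose:
  "Cw TYPE('a) i =
     (\<Sum>\<nu>\<in>{\<nu> :: 'a \<Rightarrow> nat. (\<forall>\<beta>. \<nu> \<beta> \<le> i) \<and> (\<Sum>\<beta>\<in>UNIV. \<nu> \<beta>) = i
                            \<and> (\<Sum>\<beta>\<in>UNIV. of_nat (\<nu> \<beta>) * \<beta>) = 0}.
        (CARD('a)^2 choose \<nu> 0)
      * (\<Prod>\<beta>\<in>{\<beta>. \<beta> \<noteq> 0 \<and> abs_tr r (inverse \<beta>) = 0}. (CARD('a)^2 + CARD('a)) choose \<nu> \<beta>)
      * (\<Prod>\<beta>\<in>{\<beta>. \<beta> \<noteq> 0 \<and> abs_tr r (inverse \<beta>) = 1}. (CARD('a)^2 - CARD('a)) choose \<nu> \<beta>))"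
  by (simp add: Cw_eq_card_zero_trace_subsets card_zero_sum_subsets
      flip: trace_count_def prod_trace_count_choose)

section \<open>Kloosterman moments\<close>

lemma inj_on_power2: "inj_on (\<lambda>a::'a. a^2) A"
proof (rule inj_onI)
  fix a b :: 'a
  assume "a^2 = b^2"
  then have "(a + b)^2 = 0"
    by (simp add: power2_add)
  then show "a = b"
    by (simp add: eq_iff_add_eq_0[of a b])
qed

lemma sum_kloosterman_power2_power: "(\<Sum>a\<in>UNIV - {0}. kloosterman r ((a::'a)^2) ^ k) = MK r TYPE('a) k"
proof -
  have "(\<lambda>a::'a. a^2) ` (UNIV - {0}) = UNIV - {0}"
    by (rule endo_inj_surj[OF _ _ inj_on_power2]) auto
  then show ?thesis
    unfolding MK_def using sum.reindex[OF inj_on_power2, of "\<lambda>b. kloosterman r b ^ k" "UNIV - {0}"]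
    by simp
qed

lemma card_SL2_char_support:
  assumes "(a::'a) \<noteq> 0"
  shows "2 * int (card (SL2_code.char_support a))
         = int (card (SL2 TYPE('a))) - int CARD('a) * kloosterman r (a^2)"
  using SL2_code.sum_lam_eq_card_minus_card_char_support[of a] sum_SL2_lam_trace[OF assms] by simp

lemma sum_power_card_SL2_char_support:
  assumes "h > 0"
  shows "(\<Sum>a\<in>UNIV. (2 * int (card (SL2_code.char_support a))) ^ h)
       = (\<Sum>k\<le>h. int (h choose k) * (- int CARD('a)) ^ k * int (card (SL2 TYPE('a))) ^ (h - k) * MK r TYPE('a) k)"
proof -
  let ?N = "int (card (SL2 TYPE('a)))" and ?q = "int CARD('a)"
  have "SL2_code.char_support 0 = {}"
    by (simp add: SL2_code.char_support_def)
  then have "(\<Sum>a\<in>UNIV. (2 * int (card (SL2_code.char_support a))) ^ h)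
        = (\<Sum>a\<in>UNIV - {0}. (2 * int (card (SL2_code.char_support a))) ^ h)"
    using assms by (simp add: sum.remove[of UNIV 0])
  also have "\<dots> = (\<Sum>a\<in>UNIV - {0}. (- ?q * kloosterman r ((a::'a)^2) + ?N) ^ h)"
    by (intro sum.cong refl) (simp add: card_SL2_char_support)
  also have "\<dots> = (\<Sum>a\<in>UNIV - {0}. \<Sum>k\<le>h. int (h choose k) * (- ?q * kloosterman r ((a::'a)^2)) ^ k * ?N ^ (h - k))"
    by (rule sum.cong[OF refl]) (rule binomial_ring)
  also have "\<dots> = (\<Sum>k\<le>h. int (h choose k) * (- ?q) ^ k * ?N ^ (h - k) * (\<Sum>a\<in>UNIV - {0}. kloosterman r ((a::'a)^2) ^ k))"
  proof -
    have "(- (x * y)) ^ j = (- x) ^ j * y ^ j" for x y :: int and j :: nat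
      by (metis minus_mult_left power_mult_distrib)
    then show ?thesis
      by (subst sum.swap) (simp add: sum_distrib_left mult_ac)
  qed
  also have "\<dots> = (\<Sum>k\<le>h. int (h choose k) * (- ?q) ^ k * ?N ^ (h - k) * MK r TYPE('a) k)"
    by (simp add: sum_kloosterman_power2_power)
  finally show ?thesis .
qed

lemma MK_moment_recurrence_int:
  assumes "h > 0"
  shows "int CARD('a) ^ h * MK r TYPE('a) h
     = (\<Sum>k<h. (-1) ^ (h + k + 1) * int (h choose k) * int (card (SL2 TYPE('a))) ^ (h - k)
                 * int CARD('a) ^ k * MK r TYPE('a) k)
     + int CARD('a) * (\<Sum>i\<le>card (SL2 TYPE('a)). (-1) ^ (h + i) * int (SL2_code.zero_sum_count i)
         * (\<Sum>t\<le>h. surj_num h t * 2 ^ (h - t)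
              * int (ibinom (int (card (SL2 TYPE('a))) - int i) (int (card (SL2 TYPE('a))) - int t))))"
proof -
  let ?q = "int CARD('a)" and ?N = "int (card (SL2 TYPE('a)))"
  let ?c = "\<lambda>k. int (h choose k) * (- ?q) ^ k * ?N ^ (h - k) * MK r TYPE('a) k"
  let ?R = "\<Sum>i\<le>card (SL2 TYPE('a)). (-1) ^ i * int (SL2_code.zero_sum_count i)
         * (\<Sum>t\<le>h. surj_num h t * 2 ^ (h - t)
              * int (ibinom (int (card (SL2 TYPE('a))) - int i) (int (card (SL2 TYPE('a))) - int t)))"
  have "(\<Sum>k\<le>h. ?c k) = ?q * ?R"
    using sum_power_card_SL2_char_support[OF assms] SL2_code.sum_power_card_char_support by simp
  then have top: "(- ?q) ^ h * MK r TYPE('a) h = ?q * ?R - (\<Sum>k<h. ?c k)"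
    by (simp add: lessThan_Suc_atMost[symmetric] eq_diff_eq add.commute)
  have "(-1::int) ^ h * (-1) ^ h = 1"
    by (simp add: power_mult_distrib[symmetric])
  then have "?q ^ h * MK r TYPE('a) h = (-1) ^ h * ((- ?q) ^ h * MK r TYPE('a) h)"
    by (simp only: power_minus[of ?q] mult.assoc[symmetric] mult_1_left)
  also have "\<dots> = (\<Sum>k<h. - ((-1) ^ h * ?c k)) + ?q * ((-1) ^ h * ?R)"
    by (simp only: top sum_negf) (simp add: algebra_simps sum_distrib_left)
  also have "(\<Sum>k<h. - ((-1) ^ h * ?c k)) = (\<Sum>k<h. (-1) ^ (h + k + 1) * int (h choose k)
                 * ?N ^ (h - k) * ?q ^ k * MK r TYPE('a) k)"
    by (intro sum.cong refl) (simp only: power_add power_one_right power_minus[of ?q], algebra)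
  also have "(-1) ^ h * ?R = (\<Sum>i\<le>card (SL2 TYPE('a)). (-1) ^ (h + i) * int (SL2_code.zero_sum_count i)
         * (\<Sum>t\<le>h. surj_num h t * 2 ^ (h - t)
              * int (ibinom (int (card (SL2 TYPE('a))) - int i) (int (card (SL2 TYPE('a))) - int t))))"
    by (simp add: sum_distrib_left power_add mult.assoc)
  finally show ?thesis .
qed

lemma MK_moment_recurrence:
  assumes "h > 0"
  shows "real CARD('a) ^ h * real_of_int (MK r TYPE('a) h) =
      (\<Sum>i=0..h-1. (-1) ^ (h + i + 1) * real (h choose i) * real (card (SL2 TYPE('a))) ^ (h - i)
                    * real CARD('a) ^ i * real_of_int (MK r TYPE('a) i))
    + real CARD('a) * (\<Sum>i=0..min (card (SL2 TYPE('a))) h. (-1) ^ (h + i) * real (Cw TYPE('a) i)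
        * (\<Sum>t=i..h. fact t * stirling2 h t * 2 ^ (h - t)
             * real (ibinom (int (card (SL2 TYPE('a))) - int i) (int (card (SL2 TYPE('a))) - int t))))"
proof -
  let ?N = "card (SL2 TYPE('a))"
  let ?b = "\<lambda>i t. ibinom (int ?N - int i) (int ?N - int t)"
  let ?X = "\<lambda>i. \<Sum>t\<le>h. surj_num h t * 2 ^ (h - t) * int (?b i t)"
  have X_real: "real_of_int (?X i) = (\<Sum>t=i..h. fact t * stirling2 h t * 2 ^ (h - t) * real (?b i t))" for i
  proof -
    have "?X i = (\<Sum>t\<in>{i..h}. surj_num h t * 2 ^ (h - t) * int (?b i t))"
      by (rule sum.mono_neutral_right) (auto simp: ibinom_eq_0)
    then show ?thesis
      by (simp add: of_int_surj_num)
  qed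
  have "(\<Sum>i\<le>?N. (-1) ^ (h + i) * real (SL2_code.zero_sum_count i) * real_of_int (?X i))
        = (\<Sum>i=0..min ?N h. (-1) ^ (h + i) * real (SL2_code.zero_sum_count i) * real_of_int (?X i))"
    by (rule sum.mono_neutral_right) (auto simp: ibinom_eq_0)
  also have "\<dots> = (\<Sum>i=0..min ?N h. (-1) ^ (h + i) * real (Cw TYPE('a) i)
        * (\<Sum>t=i..h. fact t * stirling2 h t * 2 ^ (h - t) * real (?b i t)))"
    by (intro sum.cong refl) (simp only: X_real Cw_eq_card_zero_trace_subsets SL2_code.zero_sum_count_def)
  moreover have "{..<h} = {0..h-1}"
    using assms by auto
  ultimately show ?thesis
    using arg_cong[where f=real_of_int, OF MK_moment_recurrence_int[OF assms]] by simp
qed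

end

theorem corollary2:
  fixes r :: nat and h :: nat
  assumes "r > 0" and "CARD('a::{field,finite}) = 2 ^ r" and "h > 0"
  defines "q \<equiv> CARD('a)" and "N \<equiv> card (SL2 TYPE('a))"
  shows "N = q * (q^2 - 1)
    \<and> (\<forall>i\<le>N. Cw TYPE('a) i =
         (\<Sum>\<nu>\<in>{\<nu> :: 'a \<Rightarrow> nat. (\<forall>\<beta>. \<nu> \<beta> \<le> i) \<and> (\<Sum>\<beta>\<in>UNIV. \<nu> \<beta>) = i
                          \<and> (\<Sum>\<beta>\<in>UNIV. of_nat (\<nu> \<beta>) * \<beta>) = 0}.
            ((q^2) choose (\<nu> 0))
            * (\<Prod>\<beta>\<in>{\<beta>. \<beta> \<noteq> 0 \<and> abs_tr r (inverse \<beta>) = 0}. ((q^2 + q) choose (\<nu> \<beta>)))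
            * (\<Prod>\<beta>\<in>{\<beta>. \<beta> \<noteq> 0 \<and> abs_tr r (inverse \<beta>) = 1}. ((q^2 - q) choose (\<nu> \<beta>)))))
    \<and> real q ^ h * real_of_int (MK r TYPE('a) h) =
        (\<Sum>i=0..h-1. (-1) ^ (h + i + 1) * real (h choose i) * real N ^ (h - i) * real q ^ i
                      * real_of_int (MK r TYPE('a) i))
      + real q * (\<Sum>i=0..min N h. (-1) ^ (h + i) * real (Cw TYPE('a) i)
                      * (\<Sum>t=i..h. fact t * stirling2 h t * 2 ^ (h - t)
                                   * real (ibinom (int N - int i) (int N - int t))))"
proof -
  interpret char2_finite_field r "TYPE('a)"
    using assms by unfold_locales
  show ?thesis
    unfolding q_def N_def
    by (intro conjI allI impI card_SL2 Cw_eq_sum_prod_choose MK_moment_recurrence assms(3))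
qed

end
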